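(* Let $0\le\alpha\le 1$ and $\beta>0$. Then $D_{\alpha,\beta}$ is a metric on the collection of all finite subsets of $\mathbb N$ if and only if $0\le\alpha\le \tfrac12$ and $\beta\ge \dfrac{1}{1-\alpha}$.
   Context: For finite sets $X,Y$ let $m(X,Y)=\min\{|X\setminus Y|,|Y\setminus X|\}$ and $M(X,Y)=\max\{|X\setminus Y|,|Y\setminus X|\}$. For $0\le\alpha\le1$ and $\beta>0$ the Tversky semimetric is $$D_{\alpha,\beta}(X,Y)=\begin{cases}\beta\,\dfrac{\alpha m(X,Y)+(1-\alpha)M(X,Y)}{|X\cap Y|+\beta\big(\alpha m(X,Y)+(1-\alpha)M(X,Y)\big)} & \text{if } X\cup Y\neq\emptyset,\\[2mm] 0 & \text{if } X=Y=\emptyset.\end{cases}$$ A metric is a function $d$ with $d(x,y)\ge0$, $d(x,y)=0$ iff $x=y$, $d(x,y)=d(y,x)$, and $d(x,y)\le d(x,z)+d(z,y)$. *)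

theory Defs
  imports Main Complex_Main
begin

definition mdiff :: "'a set \<Rightarrow> 'a set \<Rightarrow> nat" where
  "mdiff X Y = min (card (X - Y)) (card (Y - X))"

definition Mdiff :: "'a set \<Rightarrow> 'a set \<Rightarrow> nat" where
  "Mdiff X Y = max (card (X - Y)) (card (Y - X))"

definition tversky :: "real \<Rightarrow> real \<Rightarrow> 'a set \<Rightarrow> 'a set \<Rightarrow> real" where
  "tversky \<alpha> \<beta> X Y =
     (if X \<union> Y \<noteq> {} then
        \<beta> * (\<alpha> * real (mdiff X Y) + (1 - \<alpha>) * real (Mdiff X Y)) /
        (real (card (X \<inter> Y)) + \<beta> * (\<alpha> * real (mdiff X Y) + (1 - \<alpha>) * real (Mdiff X Y)))
      else 0)"

definition metric_on :: "'a set \<Rightarrow> ('a \<Rightarrow> 'a \<Rightarrow> real) \<Rightarrow> bool" where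
  "metric_on S d \<longleftrightarrow>
     (\<forall>x\<in>S. \<forall>y\<in>S. d x y \<ge> 0) \<and>
     (\<forall>x\<in>S. \<forall>y\<in>S. d x y = 0 \<longleftrightarrow> x = y) \<and>
     (\<forall>x\<in>S. \<forall>y\<in>S. d x y = d y x) \<and>
     (\<forall>x\<in>S. \<forall>y\<in>S. \<forall>z\<in>S. d x y \<le> d x z + d z y)"

end

theory Submission
  imports Defs
begin

(* Write w(X,Y) = \<alpha> m(X,Y) + (1 - \<alpha>) M(X,Y), so that D = \<beta> w / (|X \<inter> Y| + \<beta> w).
   Since w = \<alpha> (|X - Y| + |Y - X|) + (1 - 2\<alpha>) max |X - Y| |Y - X|, it satisfies the
   triangle inequality when \<alpha> \<le> 1/2; and \<beta> (1 - \<alpha>) \<ge> 1 gives \<beta> w(Z,Y) \<ge> |Z - Y|, which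
   controls how much the intersection can grow when passing from X \<inter> Y to X \<inter> Z.
   These two facts feed an elementary inequality for fractions u/(u + c).
   Conversely, for X = A + a, Y = A + b, Z = A + a + b with |A| = c, the triangle
   inequality reduces to 1 + c + \<beta> (1 - \<alpha>) \<le> 2 (1 - \<alpha>) (c + \<beta>): c = 0 gives
   \<beta> (1 - \<alpha>) \<ge> 1, and letting c grow forces \<alpha> \<le> 1/2. *)

lemma fraction_triangle_ineq:
  fixes u P Q c cP cQ :: real
  assumes "u \<ge> 0" "P \<ge> 0" "Q \<ge> 0" "c \<ge> 0" "cP \<ge> 0" "cQ \<ge> 0"
    and "u \<le> P + Q" "cP \<le> c + Q" "cQ \<le> c + P"
  shows "u / (u + c) \<le> P / (P + cP) + Q / (Q + cQ)"
proof (cases "u = 0")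
  case True
  then show ?thesis using assms by simp
next
  case False
  have "u / (u + c) \<le> (P + Q) / (P + Q + c)"
  proof -
    have "u * c \<le> (P + Q) * c" using assms by (intro mult_right_mono) auto
    then show ?thesis using False assms by (simp add: divide_simps algebra_simps)
  qed
  also have "\<dots> = P / (P + Q + c) + Q / (P + Q + c)"
    by (simp add: add_divide_distrib)
  also have "P / (P + Q + c) \<le> P / (P + cP)"
    using assms by (cases "P = 0") (auto intro: divide_left_mono)
  also have "Q / (P + Q + c) \<le> Q / (Q + cQ)"
    using assms by (cases "Q = 0") (auto intro: divide_left_mono)
  finally show ?thesis by simp
qed

lemma card_Diff_triangle:
  assumes "finite X" "finite Z"
  shows "card (X - Y) \<le> card (X - Z) + card (Z - Y)"
proof -
  have "card (X - Y) \<le> card ((X - Z) \<union> (Z - Y))"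
    using assms by (intro card_mono) auto
  also have "\<dots> \<le> card (X - Z) + card (Z - Y)" by (rule card_Un_le)
  finally show ?thesis .
qed

lemma card_Int_le_card_Int_add_Diff:
  assumes "finite X" "finite Z"
  shows "card (X \<inter> Z) \<le> card (X \<inter> Y) + card (Z - Y)"
proof -
  have "card (X \<inter> Z) \<le> card ((X \<inter> Y) \<union> (Z - Y))"
    using assms by (intro card_mono) auto
  also have "\<dots> \<le> card (X \<inter> Y) + card (Z - Y)" by (rule card_Un_le)
  finally show ?thesis .
qed

definition tversky_weight :: "real \<Rightarrow> 'a set \<Rightarrow> 'a set \<Rightarrow> real" where
  "tversky_weight \<alpha> X Y = \<alpha> * real (mdiff X Y) + (1 - \<alpha>) * real (Mdiff X Y)"

lemma tversky_eq_weight: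
  "tversky \<alpha> \<beta> X Y =
     \<beta> * tversky_weight \<alpha> X Y / (real (card (X \<inter> Y)) + \<beta> * tversky_weight \<alpha> X Y)"
  by (cases "X \<union> Y = {}") (auto simp: tversky_def tversky_weight_def mdiff_def Mdiff_def)

lemma tversky_weight_sym: "tversky_weight \<alpha> X Y = tversky_weight \<alpha> Y X"
  by (simp add: tversky_weight_def mdiff_def Mdiff_def min.commute max.commute)

lemma tversky_weight_self [simp]: "tversky_weight \<alpha> X X = 0"
  by (simp add: tversky_weight_def mdiff_def Mdiff_def)

lemma tversky_weight_eq_sum_max:
  "tversky_weight \<alpha> X Y = \<alpha> * (real (card (X - Y)) + real (card (Y - X)))
     + (1 - 2 * \<alpha>) * max (real (card (X - Y))) (real (card (Y - X)))"
  by (simp add: tversky_weight_def mdiff_def Mdiff_def min_def max_def algebra_simps)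

lemma tversky_weight_ge_card_Diff:
  assumes "0 \<le> \<alpha>" "\<alpha> \<le> 1"
  shows "(1 - \<alpha>) * real (card (Y - X)) \<le> tversky_weight \<alpha> X Y"
proof -
  have "(1 - \<alpha>) * real (card (Y - X)) \<le> (1 - \<alpha>) * real (Mdiff X Y)"
    using assms by (intro mult_left_mono) (auto simp: Mdiff_def)
  moreover have "0 \<le> \<alpha> * real (mdiff X Y)" using assms by simp
  ultimately show ?thesis by (simp add: tversky_weight_def)
qed

lemma tversky_weight_nonneg:
  assumes "0 \<le> \<alpha>" "\<alpha> \<le> 1"
  shows "0 \<le> tversky_weight \<alpha> X Y"
proof -
  have "0 \<le> (1 - \<alpha>) * real (card (Y - X))" using assms by simp
  then show ?thesis using tversky_weight_ge_card_Diff[OF assms] by (rule order_trans)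
qed

lemma tversky_weight_pos:
  assumes "0 \<le> \<alpha>" "\<alpha> < 1" "finite X" "finite Y" "X \<noteq> Y"
  shows "0 < tversky_weight \<alpha> X Y"
proof -
  have "card (X - Y) > 0 \<or> card (Y - X) > 0"
    using assms by (metis Diff_eq_empty_iff card_gt_0_iff finite_Diff subset_antisym)
  then have "1 \<le> real (Mdiff X Y)" by (auto simp: Mdiff_def)
  then show ?thesis using assms by (simp add: tversky_weight_def add_nonneg_pos)
qed

lemma tversky_weight_triangle:
  assumes "finite X" "finite Y" "finite Z" "0 \<le> \<alpha>" "\<alpha> \<le> 1/2"
  shows "tversky_weight \<alpha> X Y \<le> tversky_weight \<alpha> X Z + tversky_weight \<alpha> Z Y"
proof -
  have XY: "real (card (X - Y)) \<le> real (card (X - Z)) + real (card (Z - Y))"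
    using card_Diff_triangle[OF assms(1,3), of Y] by linarith
  have YX: "real (card (Y - X)) \<le> real (card (Y - Z)) + real (card (Z - X))"
    using card_Diff_triangle[OF assms(2,3), of X] by linarith
  have "\<alpha> * (real (card (X - Y)) + real (card (Y - X))) \<le>
      \<alpha> * (real (card (X - Z)) + real (card (Z - X)))
    + \<alpha> * (real (card (Z - Y)) + real (card (Y - Z)))"
    using XY YX assms(4) by (simp add: distrib_left[symmetric] mult_left_mono)
  moreover have "(1 - 2 * \<alpha>) * max (real (card (X - Y))) (real (card (Y - X))) \<le>
      (1 - 2 * \<alpha>) * max (real (card (X - Z))) (real (card (Z - X)))
    + (1 - 2 * \<alpha>) * max (real (card (Z - Y))) (real (card (Y - Z)))"
  proof -
    have "max (real (card (X - Y))) (real (card (Y - X))) \<le>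
        max (real (card (X - Z))) (real (card (Z - X)))
      + max (real (card (Z - Y))) (real (card (Y - Z)))"
      using XY YX by linarith
    then show ?thesis using assms(5) by (simp add: distrib_left[symmetric] mult_left_mono)
  qed
  ultimately show ?thesis unfolding tversky_weight_eq_sum_max by linarith
qed

lemma tversky_nonneg:
  assumes "0 \<le> \<alpha>" "\<alpha> \<le> 1" "0 < \<beta>"
  shows "0 \<le> tversky \<alpha> \<beta> X Y"
  unfolding tversky_eq_weight using assms tversky_weight_nonneg[OF assms(1,2), of X Y]
  by (intro divide_nonneg_nonneg add_nonneg_nonneg mult_nonneg_nonneg) auto

lemma tversky_eq_0_iff:
  assumes "0 \<le> \<alpha>" "\<alpha> < 1" "0 < \<beta>" "finite X" "finite Y"
  shows "tversky \<alpha> \<beta> X Y = 0 \<longleftrightarrow> X = Y"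
proof -
  have pos: "0 < tversky \<alpha> \<beta> X Y" if "X \<noteq> Y"
  proof -
    have "0 < \<beta> * tversky_weight \<alpha> X Y"
      using assms that tversky_weight_pos[of \<alpha> X Y] by simp
    then show ?thesis
      unfolding tversky_eq_weight by (intro divide_pos_pos add_nonneg_pos) auto
  qed
  show ?thesis
  proof
    assume zero: "tversky \<alpha> \<beta> X Y = 0"
    show "X = Y"
    proof (rule ccontr)
      assume "X \<noteq> Y"
      with pos zero show False by simp
    qed
  qed (simp add: tversky_eq_weight)
qed

lemma tversky_sym: "tversky \<alpha> \<beta> X Y = tversky \<alpha> \<beta> Y X"
  by (simp add: tversky_eq_weight tversky_weight_sym Int_commute)

lemma tversky_triangle:
  assumes "0 \<le> \<alpha>" "\<alpha> \<le> 1/2" "0 < \<beta>" "1 \<le> \<beta> * (1 - \<alpha>)"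
    and "finite X" "finite Y" "finite Z"
  shows "tversky \<alpha> \<beta> X Y \<le> tversky \<alpha> \<beta> X Z + tversky \<alpha> \<beta> Z Y"
proof -
  let ?w = "\<lambda>U V. \<beta> * tversky_weight \<alpha> U V"
  have w_nonneg: "0 \<le> ?w U V" for U V :: "'a set"
    using assms tversky_weight_nonneg[of \<alpha> U V] by simp
  have w_ge: "real (card (V - U)) \<le> ?w U V" for U V :: "'a set"
  proof -
    have "real (card (V - U)) \<le> \<beta> * (1 - \<alpha>) * real (card (V - U))"
      using assms(4) by (simp add: mult_le_cancel_right1)
    also have "\<dots> \<le> ?w U V"
      using tversky_weight_ge_card_Diff[of \<alpha> V U] assms by (simp add: mult.assoc mult_left_mono)
    finally show ?thesis .
  qed
  have "?w X Y \<le> ?w X Z + ?w Z Y"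
    using tversky_weight_triangle[OF assms(5-7,1,2)] assms(3) by (simp add: distrib_left[symmetric])
  moreover have "real (card (X \<inter> Z)) \<le> real (card (X \<inter> Y)) + ?w Z Y"
    using card_Int_le_card_Int_add_Diff[OF assms(5,7), of Y] w_ge[of Z Y]
    by (simp add: tversky_weight_sym[of \<alpha> Z Y])
  moreover have "real (card (Z \<inter> Y)) \<le> real (card (X \<inter> Y)) + ?w X Z"
    using card_Int_le_card_Int_add_Diff[OF assms(6,7), of X] w_ge[of Z X]
    by (simp add: Int_commute)
  ultimately have "?w X Y / (?w X Y + real (card (X \<inter> Y)))
      \<le> ?w X Z / (?w X Z + real (card (X \<inter> Z))) + ?w Z Y / (?w Z Y + real (card (Z \<inter> Y)))"
    using w_nonneg by (intro fraction_triangle_ineq) auto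
  then show ?thesis unfolding tversky_eq_weight by (simp add: add.commute)
qed

lemma metric_on_tversky:
  assumes "0 \<le> \<alpha>" "\<alpha> \<le> 1/2" "0 < \<beta>" "1 \<le> \<beta> * (1 - \<alpha>)"
  shows "metric_on {X. finite X} (tversky \<alpha> \<beta>)"
proof -
  have "\<alpha> < 1" using assms(2) by simp
  have "0 \<le> tversky \<alpha> \<beta> X Y" for X Y :: "'a set"
    using assms by (intro tversky_nonneg) auto
  moreover have "tversky \<alpha> \<beta> X Y = 0 \<longleftrightarrow> X = Y" if "finite X" "finite Y" for X Y :: "'a set"
    using assms \<open>\<alpha> < 1\<close> that by (intro tversky_eq_0_iff)
  moreover have "tversky \<alpha> \<beta> X Y \<le> tversky \<alpha> \<beta> X Z + tversky \<alpha> \<beta> Z Y"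
    if "finite X" "finite Y" "finite Z" for X Y Z :: "'a set"
    using assms that by (intro tversky_triangle)
  ultimately show ?thesis
    unfolding metric_on_def using tversky_sym by (intro conjI ballI) simp_all
qed

lemma tversky_insert_insert:
  assumes "finite A" "a \<notin> A" "b \<notin> A" "a \<noteq> b"
  shows "tversky \<alpha> \<beta> (insert a A) (insert b A) = \<beta> / (real (card A) + \<beta>)"
proof -
  have "insert a A - insert b A = {a}" "insert b A - insert a A = {b}"
    "insert a A \<inter> insert b A = A"
    using assms by auto
  then show ?thesis by (simp add: tversky_eq_weight tversky_weight_def mdiff_def Mdiff_def)
qed

lemma tversky_insert_right:
  assumes "finite B" "a \<notin> B"
  shows "tversky \<alpha> \<beta> B (insert a B) = \<beta> * (1 - \<alpha>) / (real (card B) + \<beta> * (1 - \<alpha>))"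
proof -
  have sets: "card (B - insert a B) = 0" "insert a B - B = {a}" "B \<inter> insert a B = B"
    using assms by auto
  show ?thesis by (simp add: sets tversky_eq_weight tversky_weight_def mdiff_def Mdiff_def)
qed

lemma metric_on_triangle:
  assumes "metric_on S d" "x \<in> S" "y \<in> S" "z \<in> S"
  shows "d x y \<le> d x z + d z y"
  using assms unfolding metric_on_def by blast

lemma metric_on_tversky_imp_ineq:
  fixes A :: "'a set"
  assumes "metric_on {X :: 'a set. finite X} (tversky \<alpha> \<beta>)" "0 \<le> \<alpha>" "\<alpha> \<le> 1" "0 < \<beta>"
    and "finite A" "a \<notin> A" "b \<notin> A" "a \<noteq> b"
  shows "1 + (2 * \<alpha> - 1) * real (card A) \<le> \<beta> * (1 - \<alpha>)"
proof -
  define c where "c = real (card A)"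
  define X Y Z where "X = insert a A" and "Y = insert b A" and "Z = insert a (insert b A)"
  have "tversky \<alpha> \<beta> X Y \<le> tversky \<alpha> \<beta> X Z + tversky \<alpha> \<beta> Z Y"
    using assms(5) unfolding X_def Y_def Z_def by (intro metric_on_triangle[OF assms(1)]) simp_all
  moreover have "tversky \<alpha> \<beta> X Y = \<beta> / (c + \<beta>)"
    using assms(5-8) unfolding X_def Y_def c_def by (rule tversky_insert_insert)
  moreover have "tversky \<alpha> \<beta> X Z = \<beta> * (1 - \<alpha>) / (1 + c + \<beta> * (1 - \<alpha>))"
  proof -
    have "Z = insert b X" unfolding X_def Z_def by auto
    then show ?thesis using assms(5-8) by (simp add: X_def c_def tversky_insert_right)
  qed
  moreover have "tversky \<alpha> \<beta> Z Y = \<beta> * (1 - \<alpha>) / (1 + c + \<beta> * (1 - \<alpha>))"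
  proof -
    have "Z = insert a Y" unfolding Y_def Z_def by auto
    then have "tversky \<alpha> \<beta> Z Y = tversky \<alpha> \<beta> Y (insert a Y)" by (simp add: tversky_sym)
    then show ?thesis using assms(5-8) by (simp add: Y_def c_def tversky_insert_right)
  qed
  ultimately have ratio: "\<beta> / (c + \<beta>) \<le> 2 * \<beta> * (1 - \<alpha>) / (1 + c + \<beta> * (1 - \<alpha>))"
    by simp
  have cross_mult: "u / v \<le> u' / v' \<Longrightarrow> 0 < v \<Longrightarrow> 0 < v' \<Longrightarrow> u * v' \<le> u' * v" for u v u' v' :: real
    by (simp add: field_simps)
  have "0 < c + \<beta>" "0 < 1 + c + \<beta> * (1 - \<alpha>)"
    using assms(3,4) by (simp_all add: c_def add_pos_nonneg)
  from cross_mult[OF ratio this]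
  have "\<beta> * (1 + c + \<beta> * (1 - \<alpha>)) \<le> \<beta> * (2 * (1 - \<alpha>) * (c + \<beta>))"
    by (simp add: algebra_simps)
  then have "1 + c + \<beta> * (1 - \<alpha>) \<le> 2 * (1 - \<alpha>) * (c + \<beta>)"
    using assms(4) by simp
  then show ?thesis unfolding c_def by (simp add: algebra_simps)
qed

lemma metric_on_tversky_nat_imp_ineq:
  assumes "metric_on {X :: nat set. finite X} (tversky \<alpha> \<beta>)" "0 \<le> \<alpha>" "\<alpha> \<le> 1" "0 < \<beta>"
  shows "1 + (2 * \<alpha> - 1) * real c \<le> \<beta> * (1 - \<alpha>)"
  using metric_on_tversky_imp_ineq[OF assms, of "{..<c}" c "Suc c"] by simp

theorem theorem3:
  fixes \<alpha> \<beta> :: real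
  assumes "0 \<le> \<alpha>" "\<alpha> \<le> 1" "\<beta> > 0"
  shows "metric_on {X :: nat set. finite X} (tversky \<alpha> \<beta>)
         \<longleftrightarrow> (\<alpha> \<le> 1/2 \<and> \<beta> \<ge> 1 / (1 - \<alpha>))"
proof
  assume metric: "metric_on {X :: nat set. finite X} (tversky \<alpha> \<beta>)"
  note ineq = metric_on_tversky_nat_imp_ineq[OF metric assms]
  have "\<alpha> \<le> 1/2"
  proof (rule ccontr)
    assume "\<not> \<alpha> \<le> 1/2"
    then obtain c :: nat where "\<beta> / (2 * \<alpha> - 1) < real c" "0 < 2 * \<alpha> - 1"
      using reals_Archimedean2 by fastforce
    then have "\<beta> < (2 * \<alpha> - 1) * real c" by (simp add: divide_simps mult.commute)
    moreover have "\<beta> * (1 - \<alpha>) \<le> \<beta>" using assms by (simp add: mult_le_cancel_left1)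
    ultimately show False using ineq[of c] by linarith
  qed
  moreover have "1 / (1 - \<alpha>) \<le> \<beta>"
    using ineq[of 0] \<open>\<alpha> \<le> 1/2\<close> by (simp add: divide_simps mult.commute)
  ultimately show "\<alpha> \<le> 1/2 \<and> \<beta> \<ge> 1 / (1 - \<alpha>)" by simp
next
  assume params: "\<alpha> \<le> 1/2 \<and> \<beta> \<ge> 1 / (1 - \<alpha>)"
  moreover have "0 < 1 - \<alpha>" using params by simp
  ultimately have "1 \<le> \<beta> * (1 - \<alpha>)" by (simp add: pos_divide_le_eq)
  then show "metric_on {X :: nat set. finite X} (tversky \<alpha> \<beta>)"
    using assms params metric_on_tversky by blast
qed

end
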